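(* Let $C$ be a linear code over $\mathbb{Z}_4$ of length $n$ and type $4^{k_1}2^{k_2}$, with generator matrix $G\in\mathbb{Z}_4^{(k_1+k_2)\times n}$. If no column of $G$ lies in $(2\mathbb{Z}_4)^{k_1+k_2}$, then $$\sum_{\mathbf{x}\in(2\mathbb{Z}_4)^{k_1+k_2}\setminus\{\mathbf{0}\}}w_L(\mathbf{x}G)=2^{k_1+k_2}n.$$
   Context: A linear code of length $n$ over $\mathbb{Z}_4$ is a $\mathbb{Z}_4$-submodule of $\mathbb{Z}_4^n$, of type $4^{k_1}2^{k_2}$ if isomorphic to $\mathbb{Z}_4^{k_1}\times\mathbb{Z}_2^{k_2}$. A generator matrix is a matrix whose rows generate the code and no proper subset of whose rows does. $2\mathbb{Z}_4=\{0,2\}$. Lee weight: $w_L(0)=0,w_L(1)=1,w_L(2)=2,w_L(3)=1$, additive on vectors. *)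

theory Defs
  imports Main "HOL-Library.Numeral_Type"
begin

text \<open>Z4 is the library type 4 (integers mod 4). Vectors of length n are lists of length n.\<close>

definition vec_add :: "4 list \<Rightarrow> 4 list \<Rightarrow> 4 list" where
  "vec_add u v = map2 (+) u v"

definition vec_smult :: "4 \<Rightarrow> 4 list \<Rightarrow> 4 list" where
  "vec_smult r v = map ((*) r) v"

definition z4_linear_code :: "nat \<Rightarrow> 4 list set \<Rightarrow> bool" where
  "z4_linear_code n C \<longleftrightarrow>
     C \<subseteq> {v. length v = n} \<and> replicate n 0 \<in> C \<and>
     (\<forall>u\<in>C. \<forall>v\<in>C. vec_add u v \<in> C) \<and>
     (\<forall>r. \<forall>v\<in>C. vec_smult r v \<in> C)"

text \<open>The Z4-module Z4^k1 x Z2^k2, with Z2 realised as the Z4-module 2Z4 = {0,2}.\<close>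
definition type_module :: "nat \<Rightarrow> nat \<Rightarrow> 4 list set" where
  "type_module k1 k2 = {xs @ ys | xs ys. length xs = k1 \<and> length ys = k2 \<and> set ys \<subseteq> {0, 2}}"

definition has_type :: "4 list set \<Rightarrow> nat \<Rightarrow> nat \<Rightarrow> bool" where
  "has_type C k1 k2 \<longleftrightarrow>
     (\<exists>f. bij_betw f C (type_module k1 k2) \<and>
          (\<forall>u\<in>C. \<forall>v\<in>C. f (vec_add u v) = vec_add (f u) (f v)) \<and>
          (\<forall>r. \<forall>v\<in>C. f (vec_smult r v) = vec_smult r (f v)))"

definition lin_comb :: "nat \<Rightarrow> 4 list list \<Rightarrow> nat set \<Rightarrow> (nat \<Rightarrow> 4) \<Rightarrow> 4 list" where
  "lin_comb n G I c = map (\<lambda>j. \<Sum>i\<in>I. c i * G ! i ! j) [0..<n]"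

definition row_span :: "nat \<Rightarrow> 4 list list \<Rightarrow> nat set \<Rightarrow> 4 list set" where
  "row_span n G I = {lin_comb n G I c | c. True}"

definition generator_matrix :: "nat \<Rightarrow> 4 list list \<Rightarrow> 4 list set \<Rightarrow> bool" where
  "generator_matrix n G C \<longleftrightarrow>
     (\<forall>r\<in>set G. length r = n) \<and>
     row_span n G {..<length G} = C \<and>
     (\<forall>I. I \<subset> {..<length G} \<longrightarrow> row_span n G I \<noteq> C)"

definition vec_mat :: "nat \<Rightarrow> 4 list \<Rightarrow> 4 list list \<Rightarrow> 4 list" where
  "vec_mat n x G = lin_comb n G {..<length G} (\<lambda>i. x ! i)"

definition lee_weight :: "4 \<Rightarrow> nat" where
  "lee_weight a = (if a = 0 then 0 else if a = 2 then 2 else 1)"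

definition lee_weight_vec :: "4 list \<Rightarrow> nat" where
  "lee_weight_vec v = sum_list (map lee_weight v)"

end

theory Submission
  imports Defs
begin

text \<open>
  Fix a column \<open>g\<close> of \<open>G\<close>; by hypothesis some entry \<open>g\<^sub>i\<close> is odd. Adding 2 to the
  \<open>i\<close>-th coordinate of \<open>x \<in> (2\<int>\<^sub>4)\<^sup>k\<close> is an involution of \<open>(2\<int>\<^sub>4)\<^sup>k\<close> that adds \<open>2 g\<^sub>i = 2\<close>
  to \<open>x \<cdot> g\<close>, and \<open>w\<^sub>L(a) + w\<^sub>L(a + 2) = 2\<close> for every \<open>a\<close>. Pairing \<open>x\<close> with its image
  shows that the Lee weights of \<open>x \<cdot> g\<close> sum to \<open>2\<^sup>k\<close>; summing over the \<open>n\<close> columns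
  gives the claim, the zero vector contributing nothing.
\<close>

lemma z4_cases: "(a::4) = 0 \<or> a = 1 \<or> a = 2 \<or> a = 3"
proof (cases a)
  case (of_int z)
  then have "z = 0 \<or> z = 1 \<or> z = 2 \<or> z = 3" by auto
  then show ?thesis using of_int by auto
qed

lemma z4_add_2_add_2 [simp]: "(a::4) + 2 + 2 = a"
  using z4_cases[of a] by auto

lemma z4_two_mult_odd: "(g::4) \<notin> {0, 2} \<Longrightarrow> 2 * g = 2"
  using z4_cases[of g] by auto

lemma lee_weight_add_2: "lee_weight a + lee_weight (a + 2) = 2"
  using z4_cases[of a] by (auto simp: lee_weight_def)

lemma lee_weight_vec_vec_mat:
  "lee_weight_vec (vec_mat n x G) = (\<Sum>j<n. lee_weight (\<Sum>i<length G. x ! i * G ! i ! j))"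
  unfolding lee_weight_vec_def vec_mat_def lin_comb_def
  by (simp add: sum_set_upt_conv_sum_list_nat[symmetric] atLeast0LessThan)

definition even_vectors :: "nat \<Rightarrow> 4 list set" where
  "even_vectors k = {x. length x = k \<and> set x \<subseteq> {0, 2}}"

lemma even_vectors_eq_lists: "even_vectors k = {x. set x \<subseteq> {0, 2} \<and> length x = k}"
  unfolding even_vectors_def by auto

lemma finite_even_vectors: "finite (even_vectors k)"
  unfolding even_vectors_eq_lists by (simp add: finite_lists_length_eq)

lemma card_even_vectors: "card (even_vectors k) = 2 ^ k"
  unfolding even_vectors_eq_lists by (simp add: card_lists_length_eq numeral_2_eq_2)

lemma replicate_zero_in_even_vectors: "replicate k 0 \<in> even_vectors k"
  unfolding even_vectors_def by (cases k) auto

lemma sum_lee_weight_involution: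
  assumes "finite S" and t_in: "\<And>x. x \<in> S \<Longrightarrow> t x \<in> S"
    and t_t: "\<And>x. x \<in> S \<Longrightarrow> t (t x) = x"
    and f_t: "\<And>x. x \<in> S \<Longrightarrow> f (t x) = f x + 2"
  shows "(\<Sum>x\<in>S. lee_weight (f x)) = card S"
proof -
  have "bij_betw t S S"
    by (rule bij_betw_byWitness[where f' = t]) (use t_in t_t in auto)
  then have "(\<Sum>x\<in>S. lee_weight (f x)) = (\<Sum>x\<in>S. lee_weight (f (t x)))"
    using sum.reindex_bij_betw[of t S S "\<lambda>x. lee_weight (f x)"] by simp
  then have "2 * (\<Sum>x\<in>S. lee_weight (f x)) = (\<Sum>x\<in>S. lee_weight (f x) + lee_weight (f (t x)))"
    by (simp add: sum.distrib)
  also have "\<dots> = (\<Sum>x\<in>S. 2)"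
    by (rule sum.cong) (simp_all add: f_t lee_weight_add_2)
  finally show ?thesis by simp
qed

lemma sum_list_update_add:
  fixes x :: "'a::comm_ring list"
  assumes "length x = k" and "i0 < k"
  shows "(\<Sum>i<k. x[i0 := x ! i0 + a] ! i * g i) = (\<Sum>i<k. x ! i * g i) + a * g i0"
proof -
  have "(\<Sum>i<k. x[i0 := x ! i0 + a] ! i * g i)
      = (x ! i0 + a) * g i0 + (\<Sum>i\<in>{..<k} - {i0}. x ! i * g i)"
    using assms by (simp add: sum.remove)
  also have "\<dots> = (\<Sum>i<k. x ! i * g i) + a * g i0"
    using assms by (simp add: sum.remove algebra_simps)
  finally show ?thesis .
qed

lemma sum_lee_weight_even_vectors_dot:
  assumes "i0 < k" and odd: "g i0 \<notin> {0, 2}"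
  shows "(\<Sum>x\<in>even_vectors k. lee_weight (\<Sum>i<k. x ! i * g i)) = 2 ^ k"
proof -
  define t where "t x = x[i0 := x ! i0 + 2]" for x :: "4 list"
  have "t x \<in> even_vectors k" if "x \<in> even_vectors k" for x
  proof -
    have "x ! i0 \<in> {0, 2}" using that \<open>i0 < k\<close> unfolding even_vectors_def by (auto dest!: nth_mem)
    then have "x ! i0 + 2 \<in> {0, 2}" by auto
    then show ?thesis using that unfolding even_vectors_def t_def
      by (auto dest!: set_update_subset_insert[THEN subsetD])
  qed
  moreover have "t (t x) = x" if "x \<in> even_vectors k" for x
    using that \<open>i0 < k\<close> unfolding even_vectors_def t_def by simp
  moreover have "(\<Sum>i<k. t x ! i * g i) = (\<Sum>i<k. x ! i * g i) + 2"
    if "x \<in> even_vectors k" for x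
    using that \<open>i0 < k\<close> z4_two_mult_odd[OF odd]
    unfolding even_vectors_def t_def by (simp add: sum_list_update_add)
  ultimately have "(\<Sum>x\<in>even_vectors k. lee_weight (\<Sum>i<k. x ! i * g i)) = card (even_vectors k)"
    by (intro sum_lee_weight_involution[OF finite_even_vectors, where t = t])
  then show ?thesis
    by (simp add: card_even_vectors)
qed

theorem corollary3p6:
  fixes n k1 k2 :: nat and C :: "4 list set" and G :: "4 list list"
  assumes "z4_linear_code n C"
    and "has_type C k1 k2"
    and "length G = k1 + k2"
    and "generator_matrix n G C"
    and "\<forall>j<n. \<not> (\<forall>i<k1 + k2. G ! i ! j \<in> {0, 2})"
  shows "(\<Sum>x \<in> {x. length x = k1 + k2 \<and> set x \<subseteq> {0, 2}} - {replicate (k1 + k2) 0}.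
            lee_weight_vec (vec_mat n x G)) = 2 ^ (k1 + k2) * n"
proof -
  define k where "k = k1 + k2"
  have "(\<Sum>i<k. replicate k 0 ! i * G ! i ! j) = 0" for j
    by simp
  then have zero: "lee_weight_vec (vec_mat n (replicate k 0) G) = 0"
    by (simp add: lee_weight_vec_vec_mat assms(3) k_def lee_weight_def)
  have column: "(\<Sum>x\<in>even_vectors k. lee_weight (\<Sum>i<k. x ! i * G ! i ! j)) = 2 ^ k"
    if "j < n" for j
  proof -
    obtain i0 where "i0 < k" "G ! i0 ! j \<notin> {0, 2}" using assms(5) \<open>j < n\<close> k_def by auto
    then show ?thesis by (rule sum_lee_weight_even_vectors_dot)
  qed
  have "(\<Sum>x \<in> even_vectors k - {replicate k 0}. lee_weight_vec (vec_mat n x G))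
      = (\<Sum>x \<in> even_vectors k. lee_weight_vec (vec_mat n x G))"
    using sum.remove[OF finite_even_vectors replicate_zero_in_even_vectors,
        of "\<lambda>x. lee_weight_vec (vec_mat n x G)"] zero by simp
  also have "\<dots> = (\<Sum>j<n. \<Sum>x\<in>even_vectors k. lee_weight (\<Sum>i<k. x ! i * G ! i ! j))"
    unfolding lee_weight_vec_vec_mat assms(3) k_def by (rule sum.swap)
  also have "\<dots> = 2 ^ k * n"
    by (simp add: column)
  finally show ?thesis
    unfolding even_vectors_def k_def .
qed

end
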